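(* Let $N\ge1$ and $\eta_S,\eta_F,\eta_{FS}\in\mathbb{R}$, and let $(X_1,\dots,X_N)\in\{0,1\}^N$ have distribution $$\Pr(X_1=x_1,\dots,X_N=x_N)=\frac{1}{Z_1}\Big(e^{\eta_F\sum_ix_i}+e^{\eta_S+(\eta_{FS}+\eta_F)\sum_ix_i}\Big),\qquad Z_1=(1+e^{\eta_F})^N+e^{\eta_S}(1+e^{\eta_F+\eta_{FS}})^N$$ (the marginal law of the firm nodes in the graph with $N$ firm nodes of weight $\eta_F$, each joined by an edge of weight $\eta_{FS}$ to a single sector node of weight $\eta_S$). Then $$\sum_{i=1}^NX_i\ \stackrel{d}{=}\ YB_1+(1-Y)B_2,$$ where $Y,B_1,B_2$ are independent, $Y\sim\mathrm{Bernoulli}\big(e^{\eta_S}(1+e^{\eta_F}e^{\eta_{FS}})^N/Z_1\big)$, $B_1\sim\mathrm{Binomial}$ with $N$ trials and success probability $\frac{e^{\eta_F}e^{\eta_{FS}}}{1+e^{\eta_F}e^{\eta_{FS}}}$, and $B_2\sim\mathrm{Binomial}$ with $N$ trials and success probability $\frac{e^{\eta_F}}{1+e^{\eta_F}}$. *)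

theory Defs
  imports "HOL-Probability.Probability"
begin

definition Z1 :: "nat \<Rightarrow> real \<Rightarrow> real \<Rightarrow> real \<Rightarrow> real" where
  "Z1 N eS eF eFS = (1 + exp eF) ^ N + exp eS * (1 + exp (eF + eFS)) ^ N"

end

theory Submission
  imports Defs
begin

text \<open>Summing out the sector node writes the law of the firm nodes as a mixture of two
  laws: in one the weight of a configuration with \<open>k\<close> active firms is proportional to \<open>c\<^sup>k\<close> with
  \<open>c = exp \<eta>\<^sub>F * exp \<eta>\<^sub>F\<^sub>S\<close>, in the other with \<open>c = exp \<eta>\<^sub>F\<close>. Normalised, such a weight is
  \<open>c\<^sup>k / (1 + c)\<^sup>N\<close>, which factorises over the firms: in each branch the firms are i.i.d.
  Bernoulli with odds \<open>c\<close>, so their number is binomial.\<close>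

lemma sum_list_of_bool_eq_length_filter:
  "(\<Sum>x\<leftarrow>xs. of_bool x) = (of_nat (length (filter id xs)) :: 'a::semiring_1)"
  by (induction xs) simp_all

lemma pmf_replicate_pmf_bernoulli:
  assumes "0 \<le> q" "q \<le> 1"
  shows "pmf (replicate_pmf n (bernoulli_pmf q)) xs =
    (if length xs = n then q ^ length (filter id xs) * (1 - q) ^ length (filter Not xs) else 0)"
proof (induction n arbitrary: xs)
  case 0
  then show ?case by (simp add: indicator_def)
next
  case (Suc n)
  have Cons: "pmf (map_pmf (Cons x) (replicate_pmf n (bernoulli_pmf q))) ys =
      (case ys of [] \<Rightarrow> 0 | y # ys' \<Rightarrow> of_bool (x = y) * pmf (replicate_pmf n (bernoulli_pmf q)) ys')"
    for x ys
    by (auto simp: pmf_map_inj' pmf_eq_0_set_pmf split: list.split)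
  show ?case
    using assms
    by (cases xs) (simp_all add: Cons pmf_bind bind_return_pmf map_pmf_def[symmetric] Suc.IH id_def)
qed

lemma pmf_replicate_pmf_bernoulli_odds:
  fixes c :: real
  assumes "0 \<le> c"
  shows "pmf (replicate_pmf n (bernoulli_pmf (c / (1 + c)))) xs =
    (if length xs = n then c ^ length (filter id xs) / (1 + c) ^ n else 0)"
proof -
  have q: "0 \<le> c / (1 + c)" "c / (1 + c) \<le> 1" "1 - c / (1 + c) = 1 / (1 + c)"
    using assms by (simp_all add: field_simps)
  have "length (filter id xs) + length (filter Not xs) = length xs"
    using sum_length_filter_compl[of id xs] by (simp add: comp_def)
  then show ?thesis
    by (auto simp: pmf_replicate_pmf_bernoulli[OF q(1,2)] q(3) power_divide power_add[symmetric])
qed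

lemma pmf_eq_bernoulli_mixture_of_replicate_pmf:
  fixes a b s :: real and P :: "bool list pmf"
  assumes "0 \<le> a" "0 \<le> b" "0 \<le> s"
  assumes P: "\<And>xs. pmf P xs = (if length xs = n then
      (b ^ length (filter id xs) + s * a ^ length (filter id xs)) / ((1 + b) ^ n + s * (1 + a) ^ n)
      else 0)"
  shows "P = bernoulli_pmf (s * (1 + a) ^ n / ((1 + b) ^ n + s * (1 + a) ^ n)) \<bind>
    (\<lambda>y. replicate_pmf n (bernoulli_pmf (if y then a / (1 + a) else b / (1 + b))))"
proof (rule pmf_eqI)
  fix xs
  define Z where "Z = (1 + b) ^ n + s * (1 + a) ^ n"
  define p where "p = s * (1 + a) ^ n / Z"
  have pos: "(1 + b) ^ n > 0" "(1 + a) ^ n > 0"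
    using assms by simp_all
  then have "Z > 0"
    using \<open>0 \<le> s\<close> by (simp add: Z_def add_pos_nonneg)
  then have p: "0 \<le> p" "p \<le> 1" "1 - p = (1 + b) ^ n / Z"
    using pos \<open>0 \<le> s\<close> by (simp_all add: p_def Z_def field_simps)
  show "pmf P xs = pmf (bernoulli_pmf p \<bind>
      (\<lambda>y. replicate_pmf n (bernoulli_pmf (if y then a / (1 + a) else b / (1 + b))))) xs"
    using assms pos
    by (simp add: P Z_def[symmetric] pmf_bind p pmf_replicate_pmf_bernoulli_odds)
       (simp add: p_def add_divide_distrib)
qed

theorem proposition2:
  fixes N :: nat and eS eF eFS :: real and P :: "bool list pmf"
  assumes "N \<ge> 1"
  assumes P: "\<And>xs. pmf P xs =
     (if length xs = N then
        (exp (eF * (\<Sum>x\<leftarrow>xs. of_bool x))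
         + exp (eS + (eFS + eF) * (\<Sum>x\<leftarrow>xs. of_bool x))) / Z1 N eS eF eFS
      else 0)"
  shows "map_pmf (\<lambda>xs. \<Sum>x\<leftarrow>xs. (of_bool x :: nat)) P =
    do { y \<leftarrow> bernoulli_pmf (exp eS * (1 + exp eF * exp eFS) ^ N / Z1 N eS eF eFS);
         b1 \<leftarrow> binomial_pmf N (exp eF * exp eFS / (1 + exp eF * exp eFS));
         b2 \<leftarrow> binomial_pmf N (exp eF / (1 + exp eF));
         return_pmf (of_bool y * b1 + (1 - of_bool y) * b2) }"
proof -
  define a where "a = exp eF * exp eFS"
  define b where "b = exp eF"
  define p where "p = exp eS * (1 + a) ^ N / Z1 N eS eF eFS"
  have Z1: "Z1 N eS eF eFS = (1 + b) ^ N + exp eS * (1 + a) ^ N"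
    by (simp add: Z1_def a_def b_def exp_add)
  have binomial: "binomial_pmf N (if y then a / (1 + a) else b / (1 + b)) = map_pmf
      (length \<circ> filter id) (replicate_pmf N (bernoulli_pmf (if y then a / (1 + a) else b / (1 + b))))"
    for y
    by (rule binomial_pmf_altdef) (simp add: a_def b_def add_pos_pos)
  have "P = bernoulli_pmf p \<bind>
      (\<lambda>y. replicate_pmf N (bernoulli_pmf (if y then a / (1 + a) else b / (1 + b))))"
    unfolding p_def Z1
  proof (rule pmf_eq_bernoulli_mixture_of_replicate_pmf)
    fix xs :: "bool list"
    show "pmf P xs = (if length xs = N then (b ^ length (filter id xs)
        + exp eS * a ^ length (filter id xs)) / ((1 + b) ^ N + exp eS * (1 + a) ^ N) else 0)"
      by (simp add: P Z1 a_def b_def sum_list_of_bool_eq_length_filter exp_add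
          mult.commute[of _ "of_nat _"] exp_of_nat_mult power_mult_distrib)
  qed (simp_all add: a_def b_def)
  then have "map_pmf (\<lambda>xs. \<Sum>x\<leftarrow>xs. (of_bool x :: nat)) P =
      bernoulli_pmf p \<bind> (\<lambda>y. binomial_pmf N (if y then a / (1 + a) else b / (1 + b)))"
    by (simp add: sum_list_of_bool_eq_length_filter map_bind_pmf binomial comp_def)
  also have "\<dots> = do { y \<leftarrow> bernoulli_pmf p;
       b1 \<leftarrow> binomial_pmf N (a / (1 + a));
       b2 \<leftarrow> binomial_pmf N (b / (1 + b));
       return_pmf (of_bool y * b1 + (1 - of_bool y) * b2) }"
    by (intro bind_pmf_cong) (auto simp: bind_return_pmf')
  finally show ?thesis
    by (simp add: p_def a_def b_def)
qed

end
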